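(* Let $N\ge1$, $K>0$, $r_1,\dots,r_N$ real numbers, $(\mu_{ij})_{1\le i,j\le N}$ a real matrix and $\Psi_1,\dots,\Psi_N:\mathbb{R}^N\to\mathbb{R}$. Assume: (H1) $r_i>0$ for all $i$; $(\mu_{ij})$ is nonnegative, symmetric and irreducible; each $\Psi_i$ is locally Lipschitz on $\mathbb{R}^N$, $\Psi_i(0)=0$, and $\Psi_i$ is monotone increasing with respect to the componentwise order of $\mathbb{R}^N$; (H2) for each $i$ there exist positive constants $R_i,k_i,c_i$ such that $c_i\left(\sum_{j=1}^N v_j\right)^{k_i}\le\Psi_i(v)$ for all $v\in[0,\infty)^N$ with $\sum_{j=1}^N|v_j|\ge R_i$; (H3) for all $i$, $\sum_{j=1}^N\mu_{ij}\le \frac{r_i}{2}$. Then there exists a positive stationary solution $\bar v$ (i.e. $\bar v_i>0$ for all $i$) of the system $$\frac{dv_i}{dt}=v_i\left[r_i-\frac{1}{K}\Psi_i(v)\right]+\sum_{j=1}^N\mu_{ij}(v_j-v_i),\qquad i=1,\dots,N.$$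
   Context: A stationary solution is a vector at which the right-hand side of the system vanishes for every $i$. *)

theory Defs
  imports "HOL-Analysis.Analysis"
begin

definition irreducible_matrix :: "real ^ 'n ^ 'n \<Rightarrow> bool" where
  "irreducible_matrix M \<longleftrightarrow>
     \<not> (\<exists>I :: 'n set. I \<noteq> {} \<and> I \<noteq> UNIV \<and> (\<forall>i\<in>I. \<forall>j. j \<notin> I \<longrightarrow> M $ i $ j = 0))"

definition locally_lipschitz :: "(real ^ 'n \<Rightarrow> real) \<Rightarrow> bool" where
  "locally_lipschitz f \<longleftrightarrow>
     (\<forall>x. \<exists>e>0. \<exists>L. \<forall>y\<in>ball x e. \<forall>z\<in>ball x e. \<bar>f y - f z\<bar> \<le> L * dist y z)"

definition componentwise_mono :: "(real ^ 'n \<Rightarrow> real) \<Rightarrow> bool" where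
  "componentwise_mono f \<longleftrightarrow> (\<forall>x y. (\<forall>j. x $ j \<le> y $ j) \<longrightarrow> f x \<le> f y)"

definition rhs :: "real \<Rightarrow> real ^ 'n \<Rightarrow> real ^ 'n ^ 'n \<Rightarrow> ('n \<Rightarrow> real ^ 'n \<Rightarrow> real)
                   \<Rightarrow> real ^ 'n \<Rightarrow> 'n \<Rightarrow> real" where
  "rhs K r mu Psi v i = v $ i * (r $ i - (1 / K) * Psi i v) + (\<Sum>j\<in>UNIV. mu $ i $ j * (v $ j - v $ i))"

definition stationary :: "real \<Rightarrow> real ^ 'n \<Rightarrow> real ^ 'n ^ 'n \<Rightarrow> ('n \<Rightarrow> real ^ 'n \<Rightarrow> real)
                   \<Rightarrow> real ^ 'n \<Rightarrow> bool" where
  "stationary K r mu Psi v \<longleftrightarrow> (\<forall>i. rhs K r mu Psi v i = 0)"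

end

theory Submission
  imports Defs "HOL-Real_Asymp.Real_Asymp"
begin

text \<open>A stationary point is found as a solution of the variational inequality of the vector
field on the slab of nonnegative vectors with total mass between s and S, which exists by
Brouwer's theorem applied to v \<mapsto> proj (v + F v). For s small the logistic terms make the
total mass grow (Psi i is close to Psi i 0 = 0), for S large (H2) they make it shrink; since the
symmetric migration terms cancel in the total mass, the solution lies on neither face and is
a zero of the field. Irreducibility then rules out vanishing components.\<close>

lemma locally_lipschitz_imp_continuous_on:
  assumes "locally_lipschitz f"
  shows "continuous_on UNIV f"
proof -
  have "isCont f x" for x
  proof -
    obtain e L where "e > 0" and L: "\<forall>y\<in>ball x e. \<forall>z\<in>ball x e. \<bar>f y - f z\<bar> \<le> L * dist y z"
      using assms unfolding locally_lipschitz_def by blast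
    have "\<bar>f y - f z\<bar> \<le> max L 0 * dist y z" if "y \<in> ball x e" "z \<in> ball x e" for y z
      using L that by (meson max.cobounded1 mult_right_mono order_trans zero_le_dist)
    then have "(max L 0)-lipschitz_on (ball x e) f"
      by (intro lipschitz_onI) (auto simp: dist_real_def)
    then have "continuous_on (ball x e) f" by (rule lipschitz_on_continuous_on)
    then show ?thesis using \<open>e > 0\<close> by (intro continuous_on_interior) auto
  qed
  then show ?thesis by (simp add: continuous_at_imp_continuous_on)
qed

lemma variational_inequality_solution_exists:
  fixes F :: "'a::euclidean_space \<Rightarrow> 'a"
  assumes "compact D" "convex D" "D \<noteq> {}" "continuous_on D F"
  shows "\<exists>v\<in>D. \<forall>y\<in>D. inner (F v) (y - v) \<le> 0"
proof -
  have "closed D" using \<open>compact D\<close> by (rule compact_imp_closed)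
  define f where "f v = closest_point D (v + F v)" for v
  have "\<exists>v\<in>D. f v = v"
  proof (rule brouwer[OF assms(1-3)])
    show "continuous_on D f" unfolding f_def
      by (intro continuous_on_compose2[OF continuous_on_closest_point[OF assms(2) \<open>closed D\<close> assms(3)]]
          continuous_intros assms(4)) auto
    show "f \<in> D \<rightarrow> D" unfolding f_def using closest_point_in_set[OF \<open>closed D\<close> assms(3)] by blast
  qed blast
  then obtain v where "v \<in> D" "f v = v" by blast
  moreover have "inner (F v) (y - v) \<le> 0" if "y \<in> D" for y
    using closest_point_dot[OF assms(2) \<open>closed D\<close> that, of "v + F v"] \<open>f v = v\<close> by (simp add: f_def)
  ultimately show ?thesis by blast
qed

definition simplex_slab :: "real \<Rightarrow> real \<Rightarrow> (real ^ 'n) set" where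
  "simplex_slab s S = {v. (\<forall>j. 0 \<le> v $ j) \<and> s \<le> (\<Sum>j\<in>UNIV. v $ j) \<and> (\<Sum>j\<in>UNIV. v $ j) \<le> S}"

lemma compact_simplex_slab: "compact (simplex_slab s S)"
proof -
  have "closed (simplex_slab s S)" unfolding simplex_slab_def
    by (intro closed_Collect_conj closed_Collect_all closed_Collect_le continuous_intros)
  moreover have "norm v \<le> S" if "v \<in> simplex_slab s S" for v
    using norm_le_l1_cart[of v] that by (simp add: simplex_slab_def)
  then have "bounded (simplex_slab s S)" by (auto simp: bounded_iff)
  ultimately show ?thesis by (simp add: compact_eq_bounded_closed)
qed

lemma convex_simplex_slab: "convex (simplex_slab s S)"
proof -
  have slab: "simplex_slab s S =
      (\<Inter>j. {v. 0 \<le> v $ j}) \<inter> {v. inner (\<chi> j. 1) v \<ge> s} \<inter> {v. inner (\<chi> j. 1) v \<le> S}"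
    by (auto simp: simplex_slab_def inner_vec_def)
  have "convex {v :: real ^ 'n. 0 \<le> v $ j}" for j
    by (auto simp: convex_def)
  then show ?thesis
    unfolding slab by (intro convex_Int convex_INT convex_halfspace_le convex_halfspace_ge)
qed

lemma simplex_slab_variational_signs:
  fixes G v :: "real ^ 'n"
  assumes v: "v \<in> simplex_slab s S"
    and vi: "\<forall>y\<in>simplex_slab s S. inner G (y - v) \<le> 0"
  shows "(\<Sum>j\<in>UNIV. v $ j) < S \<Longrightarrow> G $ i \<le> 0"
    and "s < (\<Sum>j\<in>UNIV. v $ j) \<Longrightarrow> 0 < v $ i \<Longrightarrow> 0 \<le> G $ i"
proof -
  have move: "a * G $ i \<le> 0"
    if "\<forall>j. 0 \<le> (v + axis i a) $ j" "s \<le> (\<Sum>j\<in>UNIV. v $ j) + a" "(\<Sum>j\<in>UNIV. v $ j) + a \<le> S"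
    for a
  proof -
    have "(\<Sum>j\<in>UNIV. (v + axis i a) $ j) = (\<Sum>j\<in>UNIV. v $ j) + a"
      by (simp add: sum.distrib axis_def)
    then have "v + axis i a \<in> simplex_slab s S" using that by (simp add: simplex_slab_def)
    then show ?thesis using vi by (auto simp: inner_axis mult.commute)
  qed
  have v_nonneg: "\<forall>j. 0 \<le> v $ j" and v_mass: "s \<le> (\<Sum>j\<in>UNIV. v $ j)" "(\<Sum>j\<in>UNIV. v $ j) \<le> S"
    using v by (auto simp: simplex_slab_def)
  show "G $ i \<le> 0" if "(\<Sum>j\<in>UNIV. v $ j) < S"
  proof -
    have "(S - (\<Sum>j\<in>UNIV. v $ j)) * G $ i \<le> 0"
      using v_nonneg v_mass by (intro move) (auto simp: axis_def)
    then show ?thesis using that by (simp add: mult_le_0_iff)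
  qed
  show "0 \<le> G $ i" if "s < (\<Sum>j\<in>UNIV. v $ j)" "0 < v $ i"
  proof -
    define a where "a = min (v $ i) ((\<Sum>j\<in>UNIV. v $ j) - s)"
    have "0 < a" using that by (simp add: a_def)
    moreover have "- a * G $ i \<le> 0"
      using v_nonneg v_mass \<open>0 < a\<close> by (intro move) (auto simp: axis_def a_def)
    ultimately show ?thesis by (simp add: zero_le_mult_iff)
  qed
qed

lemma simplex_slab_variational_zero:
  fixes G v :: "real ^ 'n"
  assumes "s < S"
    and v: "v \<in> simplex_slab s S"
    and vi: "\<forall>y\<in>simplex_slab s S. inner G (y - v) \<le> 0"
    and boundary: "\<And>i. v $ i = 0 \<Longrightarrow> 0 \<le> G $ i"
    and lower_face: "(\<Sum>j\<in>UNIV. v $ j) = s \<Longrightarrow> 0 < (\<Sum>j\<in>UNIV. G $ j)"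
    and upper_face: "(\<Sum>j\<in>UNIV. v $ j) = S \<Longrightarrow> (\<Sum>j\<in>UNIV. G $ j) < 0"
  shows "G = 0"
proof -
  note signs = simplex_slab_variational_signs[OF v vi]
  have v_nonneg: "\<forall>j. 0 \<le> v $ j" and v_mass: "s \<le> (\<Sum>j\<in>UNIV. v $ j)" "(\<Sum>j\<in>UNIV. v $ j) \<le> S"
    using v by (auto simp: simplex_slab_def)
  have G_nonneg: "0 \<le> G $ i" if "s < (\<Sum>j\<in>UNIV. v $ j)" for i
    using boundary signs(2)[OF that] v_nonneg by (metis less_eq_real_def)
  consider "(\<Sum>j\<in>UNIV. v $ j) = S" | "(\<Sum>j\<in>UNIV. v $ j) = s"
    | "s < (\<Sum>j\<in>UNIV. v $ j)" "(\<Sum>j\<in>UNIV. v $ j) < S"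
    using v_mass by linarith
  then show ?thesis
  proof cases
    case 1
    then have "0 \<le> (\<Sum>j\<in>UNIV. G $ j)" using G_nonneg \<open>s < S\<close> by (simp add: sum_nonneg)
    with upper_face 1 show ?thesis by simp
  next
    case 2
    then have "(\<Sum>j\<in>UNIV. G $ j) \<le> 0" using signs(1) \<open>s < S\<close> by (simp add: sum_nonpos)
    with lower_face 2 show ?thesis by simp
  next
    case 3
    then show ?thesis using signs(1) G_nonneg by (simp add: vec_eq_iff order_antisym)
  qed
qed

lemma exists_cball_all_less:
  fixes f :: "'i::finite \<Rightarrow> 'a::metric_space \<Rightarrow> real"
  assumes "\<And>i. continuous_on UNIV (f i)" and "\<And>i. f i x < b i"
  shows "\<exists>e>0. \<forall>y\<in>cball x e. \<forall>i. f i y < b i"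
proof -
  have "open {y. f i y < b i}" for i
    using open_Collect_less[OF assms(1) continuous_on_const] .
  then have "open (\<Inter>i. {y. f i y < b i})" by (intro open_INT) auto
  moreover have "x \<in> (\<Inter>i. {y. f i y < b i})" using assms(2) by simp
  ultimately obtain e where "e > 0" "ball x e \<subseteq> (\<Inter>i. {y. f i y < b i})"
    by (meson openE)
  then show ?thesis by (intro exI[of _ "e / 2"]) (auto simp: subset_iff)
qed

lemma eventually_power_growth_exceeds:
  fixes Psi :: "real ^ 'n \<Rightarrow> real"
  assumes "0 < k" "0 < c"
    and growth: "\<forall>v. (\<forall>j. v $ j \<ge> 0) \<and> (\<Sum>j\<in>UNIV. \<bar>v $ j\<bar>) \<ge> R
                    \<longrightarrow> c * (\<Sum>j\<in>UNIV. v $ j) powr k \<le> Psi v"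
  shows "\<forall>\<^sub>F S in at_top. \<forall>v. (\<forall>j. 0 \<le> v $ j) \<and> (\<Sum>j\<in>UNIV. v $ j) = S \<longrightarrow> M < Psi v"
proof -
  have "filterlim (\<lambda>x. c * x powr k) at_top at_top"
    using \<open>0 < c\<close> by (intro filterlim_tendsto_pos_mult_at_top[OF tendsto_const] real_powr_at_top \<open>0 < k\<close>)
  then have "\<forall>\<^sub>F S in at_top. M < c * S powr k" by (simp add: filterlim_at_top_dense)
  with eventually_ge_at_top[of R] show ?thesis
    by eventually_elim (use growth in \<open>fastforce intro: less_le_trans\<close>)
qed

lemma exists_large_mass_exceeding:
  fixes Psi :: "'i::finite \<Rightarrow> real ^ 'n \<Rightarrow> real"
  assumes "\<forall>i. \<exists>R k c. R > 0 \<and> k > 0 \<and> c > 0 \<and>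
               (\<forall>v. (\<forall>j. v $ j \<ge> 0) \<and> (\<Sum>j\<in>UNIV. \<bar>v $ j\<bar>) \<ge> R
                    \<longrightarrow> c * (\<Sum>j\<in>UNIV. v $ j) powr k \<le> Psi i v)"
  shows "\<exists>S>s. \<forall>i v. (\<forall>j. 0 \<le> v $ j) \<and> (\<Sum>j\<in>UNIV. v $ j) = S \<longrightarrow> M i < Psi i v"
proof -
  have "\<forall>\<^sub>F S in at_top. \<forall>v. (\<forall>j. 0 \<le> v $ j) \<and> (\<Sum>j\<in>UNIV. v $ j) = S \<longrightarrow> M i < Psi i v" for i
  proof -
    obtain R k c where "k > 0" "c > 0"
      "\<forall>v. (\<forall>j. v $ j \<ge> 0) \<and> (\<Sum>j\<in>UNIV. \<bar>v $ j\<bar>) \<ge> R \<longrightarrow> c * (\<Sum>j\<in>UNIV. v $ j) powr k \<le> Psi i v"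
      using assms by blast
    then show ?thesis by (rule eventually_power_growth_exceeds)
  qed
  then have "\<forall>\<^sub>F S in at_top. s < S \<and> (\<forall>i v. (\<forall>j. 0 \<le> v $ j) \<and> (\<Sum>j\<in>UNIV. v $ j) = S \<longrightarrow> M i < Psi i v)"
    by (intro eventually_conj eventually_gt_at_top) (simp add: eventually_all_finite)
  then show ?thesis by (auto simp: eventually_at_top_linorder)
qed

lemma sum_mass_weighted_pos:
  fixes v :: "real ^ 'n"
  assumes "\<forall>j. 0 \<le> v $ j" "v \<noteq> 0" "\<And>i. 0 < a i"
  shows "0 < (\<Sum>i\<in>UNIV. v $ i * a i)"
proof -
  obtain i where "v $ i \<noteq> 0" using \<open>v \<noteq> 0\<close> by (auto simp: vec_eq_iff)
  then have "0 < v $ i" using assms(1) by (simp add: less_le)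
  then have "0 < v $ i * a i" using assms(3) by simp
  moreover have "0 \<le> v $ j * a j" for j
    by (metis assms(1,3) less_imp_le mult_nonneg_nonneg)
  ultimately show ?thesis by (intro sum_pos2[of UNIV i]) auto
qed

lemma sum_migration_zero:
  fixes mu :: "real ^ 'n ^ 'n" and v :: "real ^ 'n"
  assumes mu_sym: "\<forall>i j. mu $ i $ j = mu $ j $ i"
  shows "(\<Sum>i\<in>UNIV. \<Sum>j\<in>UNIV. mu $ i $ j * (v $ j - v $ i)) = 0"
proof -
  have "(\<Sum>i\<in>UNIV. \<Sum>j\<in>UNIV. mu $ i $ j * v $ j) = (\<Sum>j\<in>UNIV. \<Sum>i\<in>UNIV. mu $ j $ i * v $ j)"
    using mu_sym by (subst sum.swap) simp
  then show ?thesis by (simp add: right_diff_distrib sum_subtractf)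
qed

lemma sum_rhs:
  assumes "\<forall>i j. mu $ i $ j = mu $ j $ i"
  shows "(\<Sum>i\<in>UNIV. rhs K r mu Psi v i) = (\<Sum>i\<in>UNIV. v $ i * (r $ i - (1 / K) * Psi i v))"
  unfolding rhs_def using sum_migration_zero[OF assms, of v] by (simp add: sum.distrib)

lemma rhs_nonneg_at_zero_component:
  assumes "\<forall>i j. 0 \<le> mu $ i $ j" "\<forall>j. 0 \<le> v $ j" "v $ i = 0"
  shows "0 \<le> rhs K r mu Psi v i"
  using assms by (auto simp: rhs_def intro!: sum_nonneg)

lemma continuous_on_rhs:
  assumes "\<forall>i. locally_lipschitz (Psi i)"
  shows "continuous_on UNIV (\<lambda>v. \<chi> i. rhs K r mu Psi v i)"
  using assms locally_lipschitz_imp_continuous_on unfolding rhs_def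
  by (intro continuous_intros) blast

lemma sum_rhs_pos:
  assumes "\<forall>i j. mu $ i $ j = mu $ j $ i" "0 < K" "\<forall>j. 0 \<le> v $ j" "v \<noteq> 0"
    and "\<And>i. Psi i v < K * r $ i"
  shows "0 < (\<Sum>i\<in>UNIV. rhs K r mu Psi v i)"
  unfolding sum_rhs[OF assms(1)] using assms(2,5)
  by (intro sum_mass_weighted_pos[OF assms(3,4)]) (simp add: field_simps)

lemma sum_rhs_neg:
  assumes "\<forall>i j. mu $ i $ j = mu $ j $ i" "0 < K" "\<forall>j. 0 \<le> v $ j" "v \<noteq> 0"
    and "\<And>i. K * r $ i < Psi i v"
  shows "(\<Sum>i\<in>UNIV. rhs K r mu Psi v i) < 0"
proof -
  have "0 < (\<Sum>i\<in>UNIV. v $ i * ((1 / K) * Psi i v - r $ i))"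
    using assms(2,5) by (intro sum_mass_weighted_pos[OF assms(3,4)]) (simp add: field_simps)
  then show ?thesis unfolding sum_rhs[OF assms(1)] by (simp add: right_diff_distrib sum_subtractf)
qed

lemma exists_nonneg_stationary_in_slab:
  assumes mu_nonneg: "\<forall>i j. 0 \<le> mu $ i $ j" and mu_sym: "\<forall>i j. mu $ i $ j = mu $ j $ i"
    and K_pos: "0 < K" and Psi_lip: "\<forall>i. locally_lipschitz (Psi i)"
    and "0 < s" "s < S"
    and small_mass: "\<forall>v\<in>cball 0 s. \<forall>i. Psi i v < K * r $ i"
    and large_mass: "\<forall>i v. (\<forall>j. 0 \<le> v $ j) \<and> (\<Sum>j\<in>UNIV. v $ j) = S \<longrightarrow> K * r $ i < Psi i v"
  shows "\<exists>v\<in>simplex_slab s S. stationary K r mu Psi v"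
proof -
  define F where "F v = (\<chi> i. rhs K r mu Psi v i)" for v
  have "((\<chi> j. s / CARD('n)) :: real ^ 'n) \<in> simplex_slab s S"
    using \<open>0 < s\<close> \<open>s < S\<close> by (simp add: simplex_slab_def)
  then obtain v where v: "v \<in> simplex_slab s S" and vi: "\<forall>y\<in>simplex_slab s S. inner (F v) (y - v) \<le> 0"
    using variational_inequality_solution_exists[OF compact_simplex_slab convex_simplex_slab]
      continuous_on_subset[OF continuous_on_rhs[OF Psi_lip]] unfolding F_def by blast
  have v_nonneg: "\<forall>j. 0 \<le> v $ j" and "v \<noteq> 0"
    using v \<open>0 < s\<close> by (auto simp: simplex_slab_def)
  have "F v = 0"
  proof (rule simplex_slab_variational_zero[OF \<open>s < S\<close> v vi])
    show "0 \<le> F v $ i" if "v $ i = 0" for i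
      using rhs_nonneg_at_zero_component[OF mu_nonneg v_nonneg that] by (simp add: F_def)
    show "0 < (\<Sum>j\<in>UNIV. F v $ j)" if "(\<Sum>j\<in>UNIV. v $ j) = s"
    proof -
      have "v \<in> cball 0 s" using norm_le_l1_cart[of v] v_nonneg that by simp
      then have "\<And>i. Psi i v < K * r $ i" using small_mass by blast
      then show ?thesis using sum_rhs_pos[OF mu_sym K_pos v_nonneg \<open>v \<noteq> 0\<close>] by (simp add: F_def)
    qed
    show "(\<Sum>j\<in>UNIV. F v $ j) < 0" if "(\<Sum>j\<in>UNIV. v $ j) = S"
    proof -
      have "\<And>i. K * r $ i < Psi i v" using large_mass v_nonneg that by blast
      then show ?thesis using sum_rhs_neg[OF mu_sym K_pos v_nonneg \<open>v \<noteq> 0\<close>] by (simp add: F_def)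
    qed
  qed
  then show ?thesis using v by (auto simp: stationary_def F_def vec_eq_iff)
qed

text \<open>Irreducibility: the zero set of a nonnegative stationary point receives no migration,
so it is empty or everything.\<close>
lemma stationary_nonneg_imp_pos:
  assumes mu_nonneg: "\<forall>i j. 0 \<le> mu $ i $ j" and mu_irred: "irreducible_matrix mu"
    and v_nonneg: "\<forall>j. 0 \<le> v $ j" and "v \<noteq> 0"
    and stat: "stationary K r mu Psi v"
  shows "\<forall>i. 0 < v $ i"
proof (rule ccontr)
  assume "\<not> (\<forall>i. 0 < v $ i)"
  define Z where "Z = {i. v $ i = 0}"
  have "Z \<noteq> {}" using \<open>\<not> (\<forall>i. 0 < v $ i)\<close> v_nonneg by (auto simp: Z_def less_eq_real_def)
  moreover have "Z \<noteq> UNIV" using \<open>v \<noteq> 0\<close> by (auto simp: Z_def vec_eq_iff)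
  moreover have "mu $ i $ j = 0" if "i \<in> Z" "j \<notin> Z" for i j
  proof -
    have "rhs K r mu Psi v i = (\<Sum>l\<in>UNIV. mu $ i $ l * v $ l)"
      using \<open>i \<in> Z\<close> by (simp add: rhs_def Z_def)
    then have "(\<Sum>l\<in>UNIV. mu $ i $ l * v $ l) = 0"
      using stat by (simp add: stationary_def)
    then have "mu $ i $ j * v $ j = 0"
      using mu_nonneg v_nonneg by (subst (asm) sum_nonneg_eq_0_iff) auto
    then show ?thesis using \<open>j \<notin> Z\<close> by (simp add: Z_def)
  qed
  ultimately show False using mu_irred unfolding irreducible_matrix_def by blast
qed

theorem theorem1p3:
  fixes K :: real and r :: "real ^ 'n" and mu :: "real ^ 'n ^ 'n"
    and Psi :: "'n \<Rightarrow> real ^ 'n \<Rightarrow> real"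
  assumes K_pos: "K > 0"
    and r_pos: "\<forall>i. r $ i > 0"
    and mu_nonneg: "\<forall>i j. mu $ i $ j \<ge> 0"
    and mu_sym: "\<forall>i j. mu $ i $ j = mu $ j $ i"
    and mu_irred: "irreducible_matrix mu"
    and Psi_lip: "\<forall>i. locally_lipschitz (Psi i)"
    and Psi_zero: "\<forall>i. Psi i 0 = 0"
    and Psi_mono: "\<forall>i. componentwise_mono (Psi i)"
    and H2: "\<forall>i. \<exists>R k c. R > 0 \<and> k > 0 \<and> c > 0 \<and>
               (\<forall>v. (\<forall>j. v $ j \<ge> 0) \<and> (\<Sum>j\<in>UNIV. \<bar>v $ j\<bar>) \<ge> R
                    \<longrightarrow> c * (\<Sum>j\<in>UNIV. v $ j) powr k \<le> Psi i v)"
    and H3: "\<forall>i. (\<Sum>j\<in>UNIV. mu $ i $ j) \<le> r $ i / 2"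
  shows "\<exists>v. (\<forall>i. v $ i > 0) \<and> stationary K r mu Psi v"
proof -
  have "\<And>i. continuous_on UNIV (Psi i)" using Psi_lip locally_lipschitz_imp_continuous_on by blast
  then obtain s where "0 < s" and small_mass: "\<forall>v\<in>cball 0 s. \<forall>i. Psi i v < K * r $ i"
    using exists_cball_all_less[of Psi 0 "\<lambda>i. K * r $ i"] Psi_zero K_pos r_pos by auto
  obtain S where "s < S"
    and large_mass: "\<forall>i v. (\<forall>j. 0 \<le> v $ j) \<and> (\<Sum>j\<in>UNIV. v $ j) = S \<longrightarrow> K * r $ i < Psi i v"
    using exists_large_mass_exceeding[OF H2, of s "\<lambda>i. K * r $ i"] by blast
  obtain v where v: "v \<in> simplex_slab s S" and stat: "stationary K r mu Psi v"
    using exists_nonneg_stationary_in_slab[OF mu_nonneg mu_sym K_pos Psi_lip \<open>0 < s\<close> \<open>s < S\<close>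
        small_mass large_mass] by blast
  have v_nonneg: "\<forall>j. 0 \<le> v $ j" and "v \<noteq> 0"
    using v \<open>0 < s\<close> by (auto simp: simplex_slab_def)
  then show ?thesis
    using stationary_nonneg_imp_pos[OF mu_nonneg mu_irred v_nonneg \<open>v \<noteq> 0\<close> stat] stat by blast
qed

end
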